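(* Let $G=K_n$ be the complete graph of order $n\geq 3$, let $g:V(G_1)\to V(G_2)$ be a function with image $I=\{v_1,\dots,v_s\}$ ($s=|I|$), let $n_i=|\{u\in V(G_1): g(u)=v_i\}|$ for $1\le i\le s$, and let $m=|\{i: 1\le i\le s,\ n_i=1\}|$. If $2\leq m\leq s$, then $Dist(F_G)\geq \psi(m)$.
   Context: $Dist(H)$ is the least $t$ such that $H$ has a labeling $V(H)\to\{1,\dots,t\}$ preserved by no non-identity automorphism of $H$. Functigraph: for disjoint copies $G_1,G_2$ of $G$ and a function $g:V(G_1)\to V(G_2)$, $F_G$ has vertex set $V(G_1)\cup V(G_2)$ and edge set $E(G_1)\cup E(G_2)\cup\{uv: u\in V(G_1),\ g(u)=v\}$. The function $\psi:\mathbb{N}\setminus\{1\}\to\mathbb{N}\setminus\{1\}$ is defined by $\psi(m)=k$, where $k$ is the least number (with $k\ge2$) such that $m\leq 2\binom{k}{2}+k$. *)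

theory Defs
  imports Main
begin

definition is_aut :: "'v set \<Rightarrow> ('v \<Rightarrow> 'v \<Rightarrow> bool) \<Rightarrow> ('v \<Rightarrow> 'v) \<Rightarrow> bool" where
  "is_aut V E f \<longleftrightarrow> bij_betw f V V \<and> (\<forall>u\<in>V. \<forall>v\<in>V. E (f u) (f v) \<longleftrightarrow> E u v)"

definition dist_num :: "'v set \<Rightarrow> ('v \<Rightarrow> 'v \<Rightarrow> bool) \<Rightarrow> nat" where
  "dist_num V E = (LEAST t. \<exists>c :: 'v \<Rightarrow> nat. (\<forall>v\<in>V. c v \<in> {1..t}) \<and>
      (\<forall>f. is_aut V E f \<and> (\<forall>v\<in>V. c (f v) = c v) \<longrightarrow> (\<forall>v\<in>V. f v = v)))"

definition complete_adj :: "'a \<Rightarrow> 'a \<Rightarrow> bool" where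
  "complete_adj u v \<longleftrightarrow> u \<noteq> v"

text \<open>Functigraph: G1 = Inl copy, G2 = Inr copy, g maps V(G1) to V(G2).\<close>
definition fg_vertices :: "'a set \<Rightarrow> ('a + 'a) set" where
  "fg_vertices V = Inl ` V \<union> Inr ` V"

fun fg_adj :: "('a \<Rightarrow> 'a \<Rightarrow> bool) \<Rightarrow> ('a \<Rightarrow> 'a) \<Rightarrow> 'a + 'a \<Rightarrow> 'a + 'a \<Rightarrow> bool" where
  "fg_adj E g (Inl u) (Inl v) = E u v"
| "fg_adj E g (Inr u) (Inr v) = E u v"
| "fg_adj E g (Inl u) (Inr v) = (g u = v)"
| "fg_adj E g (Inr v) (Inl u) = (g u = v)"

definition psi :: "nat \<Rightarrow> nat" where
  "psi m = (LEAST k. 2 \<le> k \<and> m \<le> 2 * (k choose 2) + k)"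

end

theory Submission
  imports Defs "HOL-Combinatorics.Transposition"
begin

text \<open>Call a vertex of the first copy singular if it is the only preimage of its image.
  Two singular vertices u, u' can be swapped simultaneously with their images g u, g u';
  in the functigraph of K_n this is an automorphism, so a distinguishing labeling with t colours
  must separate the pairs (colour of u, colour of g u). Hence the number m of singular vertices
  is at most t^2 = 2 (t choose 2) + t, i.e. t \<ge> \<psi>(m).\<close>

definition distinguishing :: "'v set \<Rightarrow> ('v \<Rightarrow> 'v \<Rightarrow> bool) \<Rightarrow> ('v \<Rightarrow> nat) \<Rightarrow> bool" where
  "distinguishing V E c \<longleftrightarrow>
     (\<forall>f. is_aut V E f \<and> (\<forall>v\<in>V. c (f v) = c v) \<longrightarrow> (\<forall>v\<in>V. f v = v))"

definition singular :: "'a set \<Rightarrow> ('a \<Rightarrow> 'b) \<Rightarrow> 'a set" where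
  "singular V g = {u \<in> V. \<forall>x\<in>V. g x = g u \<longrightarrow> x = u}"

lemma dist_num_labeling:
  assumes "finite V"
  shows "\<exists>c. (\<forall>v\<in>V. c v \<in> {1..dist_num V E}) \<and> distinguishing V E c"
proof -
  obtain h where h: "bij_betw h V {0..<card V}"
    using ex_bij_betw_finite_nat[OF assms] by blast
  have "\<forall>v\<in>V. h v + 1 \<in> {1..card V}"
    using h bij_betwE by fastforce
  moreover have "distinguishing V E (\<lambda>v. h v + 1)"
    using h unfolding distinguishing_def is_aut_def
    by (metis add_right_cancel bij_betwE bij_betw_imp_inj_on inj_onD)
  ultimately have "\<exists>c. (\<forall>v\<in>V. c v \<in> {1..card V}) \<and> distinguishing V E c"
    by (intro exI[of _ "\<lambda>v. h v + 1"] conjI)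
  then show ?thesis
    unfolding dist_num_def distinguishing_def by (rule LeastI_ex[OF exI])
qed

lemma is_aut_complete_transpose:
  assumes "a \<in> V" "b \<in> V"
  shows "is_aut V complete_adj (Transposition.transpose a b)"
  using assms by (simp add: is_aut_def complete_adj_def inj_eq[OF inj_transpose])

lemma is_aut_fg_map_sum:
  assumes \<sigma>: "is_aut V E \<sigma>" and \<tau>: "is_aut V E \<tau>"
    and g: "g ` V \<subseteq> V" and comm: "\<And>u. u \<in> V \<Longrightarrow> g (\<sigma> u) = \<tau> (g u)"
  shows "is_aut (fg_vertices V) (fg_adj E g) (map_sum \<sigma> \<tau>)"
proof -
  have inj: "inj_on \<sigma> V" "inj_on \<tau> V" and img: "\<sigma> ` V = V" "\<tau> ` V = V"
    using \<sigma> \<tau> by (simp_all add: is_aut_def bij_betw_def)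
  have "inj_on (map_sum \<sigma> \<tau>) (fg_vertices V)"
  proof (rule inj_onI)
    fix x y assume "x \<in> fg_vertices V" "y \<in> fg_vertices V" "map_sum \<sigma> \<tau> x = map_sum \<sigma> \<tau> y"
    then show "x = y"
      unfolding fg_vertices_def
      by (auto simp: inj_on_eq_iff[OF inj(1)] inj_on_eq_iff[OF inj(2)])
  qed
  moreover have "map_sum \<sigma> \<tau> ` fg_vertices V = Inl ` \<sigma> ` V \<union> Inr ` \<tau> ` V"
    unfolding fg_vertices_def by (simp add: image_Un image_image)
  moreover have "fg_adj E g (map_sum \<sigma> \<tau> x) (map_sum \<sigma> \<tau> y) = fg_adj E g x y"
    if "x \<in> fg_vertices V" "y \<in> fg_vertices V" for x y
  proof -
    have adj: "E (\<sigma> a) (\<sigma> b) = E a b" "E (\<tau> a) (\<tau> b) = E a b" if "a \<in> V" "b \<in> V" for a b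
      using \<sigma> \<tau> that by (simp_all add: is_aut_def)
    have arc: "(g (\<sigma> a) = \<tau> b) = (g a = b)" if "a \<in> V" "b \<in> V" for a b
      using inj_on_eq_iff[OF inj(2)] g that by (auto simp: comm)
    from that show ?thesis
      unfolding fg_vertices_def by (auto simp: adj arc)
  qed
  ultimately show ?thesis
    by (simp add: is_aut_def bij_betw_def img fg_vertices_def)
qed

lemma transpose_singular_commute:
  assumes "u \<in> singular V g" "u' \<in> singular V g" "a \<in> V"
  shows "g (Transposition.transpose u u' a) = Transposition.transpose (g u) (g u') (g a)"
  using assms unfolding singular_def
  by (cases "a = u \<or> a = u'") (auto simp: transpose_def)

lemma unique_preimage_values_subset:
  "{v \<in> g ` V. card {u \<in> V. g u = v} = 1} \<subseteq> g ` singular V g"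
proof
  fix v assume "v \<in> {v \<in> g ` V. card {u \<in> V. g u = v} = 1}"
  then have "card {x \<in> V. g x = v} = 1"
    by (simp only: mem_Collect_eq)
  then obtain u where fibre: "{x \<in> V. g x = v} = {u}"
    by (rule card_1_singletonE)
  have "u \<in> {x \<in> V. g x = v}"
    by (simp add: fibre)
  moreover have "x = u" if "x \<in> V" "g x = v" for x
  proof -
    have "x \<in> {x \<in> V. g x = v}"
      using that by simp
    then show ?thesis
      by (simp add: fibre)
  qed
  ultimately show "v \<in> g ` singular V g"
    unfolding singular_def by (intro image_eqI[of v g u]) auto
qed

lemma inj_on_singular_colours:
  assumes g: "g ` V \<subseteq> V" and c: "distinguishing (fg_vertices V) (fg_adj complete_adj g) c"
  shows "inj_on (\<lambda>u. (c (Inl u), c (Inr (g u)))) (singular V g)"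
proof (rule inj_onI, rule ccontr)
  fix u u' assume u: "u \<in> singular V g" and u': "u' \<in> singular V g"
    and same: "(c (Inl u), c (Inr (g u))) = (c (Inl u'), c (Inr (g u')))" and "u \<noteq> u'"
  have uV: "u \<in> V" "u' \<in> V"
    using u u' by (simp_all add: singular_def)
  define f where "f = map_sum (Transposition.transpose u u') (Transposition.transpose (g u) (g u'))"
  have aut: "is_aut (fg_vertices V) (fg_adj complete_adj g) f"
    unfolding f_def using uV g u u'
    by (intro is_aut_fg_map_sum is_aut_complete_transpose transpose_singular_commute)
       (simp_all add: image_subset_iff)
  have "c (f x) = c x" for x
    using same unfolding f_def by (cases x) (simp_all add: transpose_def)
  moreover have "Inl u \<in> fg_vertices V"
    using uV by (simp add: fg_vertices_def)
  ultimately have "f (Inl u) = Inl u"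
    using c aut unfolding distinguishing_def by blast
  with \<open>u \<noteq> u'\<close> show False
    unfolding f_def by simp
qed

lemma card_singular_le_square:
  assumes g: "g ` V \<subseteq> V"
    and c: "\<forall>x\<in>fg_vertices V. c x \<in> {1..t}" "distinguishing (fg_vertices V) (fg_adj complete_adj g) c"
  shows "card (singular V g) \<le> t * t"
proof -
  have "card (singular V g) \<le> card ({1..t} \<times> {1..t})"
  proof (rule card_inj_on_le)
    show "inj_on (\<lambda>u. (c (Inl u), c (Inr (g u)))) (singular V g)"
      using g c(2) by (rule inj_on_singular_colours)
    show "(\<lambda>u. (c (Inl u), c (Inr (g u)))) ` singular V g \<subseteq> {1..t} \<times> {1..t}"
    proof (rule image_subsetI)
      fix u assume "u \<in> singular V g"
      then have "Inl u \<in> fg_vertices V" "Inr (g u) \<in> fg_vertices V"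
        using g by (auto simp: singular_def fg_vertices_def)
      then show "(c (Inl u), c (Inr (g u))) \<in> {1..t} \<times> {1..t}"
        using c(1) by simp
    qed
  qed simp
  then show ?thesis
    by simp
qed

lemma psi_le:
  assumes "2 \<le> t" and "m \<le> t * t"
  shows "psi m \<le> t"
proof -
  have "2 * (t choose 2) + t = t * t"
    by (cases t) (simp_all add: choose_two algebra_simps)
  then show ?thesis
    unfolding psi_def using assms by (intro Least_le) simp
qed

theorem proposition3p2:
  fixes V :: "'a set" and g :: "'a \<Rightarrow> 'a"
  assumes "finite V" and "card V \<ge> 3"
    and "\<forall>u\<in>V. g u \<in> V"
    and "2 \<le> card {v \<in> g ` V. card {u \<in> V. g u = v} = 1}"
    and "card {v \<in> g ` V. card {u \<in> V. g u = v} = 1} \<le> card (g ` V)"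
  shows "dist_num (fg_vertices V) (fg_adj complete_adj g)
           \<ge> psi (card {v \<in> g ` V. card {u \<in> V. g u = v} = 1})"
proof -
  define t where "t = dist_num (fg_vertices V) (fg_adj complete_adj g)"
  have "finite (fg_vertices V)"
    using assms(1) by (simp add: fg_vertices_def)
  then obtain c where "\<forall>x\<in>fg_vertices V. c x \<in> {1..t}"
    and "distinguishing (fg_vertices V) (fg_adj complete_adj g) c"
    unfolding t_def using dist_num_labeling by blast
  moreover have "g ` V \<subseteq> V"
    using assms(3) by blast
  ultimately have square: "card (singular V g) \<le> t * t"
    by (intro card_singular_le_square)
  have "finite (singular V g)"
    using assms(1) by (simp add: singular_def)
  then have "card {v \<in> g ` V. card {u \<in> V. g u = v} = 1} \<le> card (g ` singular V g)"
    by (intro card_mono finite_imageI unique_preimage_values_subset)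
  also have "\<dots> \<le> card (singular V g)"
    by (rule card_image_le) fact
  finally have m_le: "card {v \<in> g ` V. card {u \<in> V. g u = v} = 1} \<le> t * t"
    using square by linarith
  have "2 \<le> t"
  proof (rule ccontr)
    assume "\<not> 2 \<le> t"
    then have "t * t \<le> 1 * 1"
      by (intro mult_le_mono) auto
    with m_le assms(4) show False
      by simp
  qed
  then show ?thesis
    using m_le unfolding t_def by (rule psi_le)
qed

end
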